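(* Let $\Sigma$ be a finite alphabet and $f,f'\in H_\Sigma$ forests. Then: (1) no two distinct sibling nodes in $\Psi(f)$ carry the same label; (2) $\pi(f)=\pi(\Psi(f))$; (3) $\pi(f)=\pi(f')$ if and only if $\Psi(f)=\Psi(f')$.
   Context: Trees over $\Sigma$ are $\alpha[C]$ with $\alpha\in\Sigma$ and $C$ a finite set of trees (order and multiplicity of children ignored). Forests are finite sets of trees, with union written $+$. For a forest $f$, $\pi(f)\subseteq\Sigma^*$ is the set of (not necessarily maximal) label paths starting at a root, including the empty word. The map $\Psi:H_\Sigma\to H_\Sigma$ is defined recursively as follows. Write $f=\beta_1[f_1]+\dots+\beta_n[f_n]$ ($n\ge 0$), where $\beta_i\in\Sigma$ and the $f_i$ are forests. For each $\beta\in\{\beta_1,\dots,\beta_n\}$ let $F_\beta=\{f_i:\beta_i=\beta\}$. Then $$\Psi(f)=\sum_{\beta\in\{\beta_1,\dots,\beta_n\}}\beta\Big[\Psi\Big(\sum_{f'\in F_\beta}f'\Big)\Big].$$ *)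

theory Defs
  imports "HOL-Library.FSet"
begin

datatype 'a tree = Node (label: 'a) (children: "'a tree fset")

type_synonym 'a forest = "'a tree fset"

text \<open>Height of a tree / forest (used only to justify termination of Psi).\<close>
primrec theight :: "'a tree \<Rightarrow> nat" where
  "theight (Node a C) = Suc (fMax (finsert 0 (fimage theight C)))"

definition fheight :: "'a forest \<Rightarrow> nat" where
  "fheight f = fMax (finsert 0 (fimage theight f))"

text \<open>Label paths starting at a root (not necessarily maximal), including the empty word.\<close>
inductive is_path :: "'a forest \<Rightarrow> 'a list \<Rightarrow> bool" where
  nil: "is_path f []"
| cons: "Node a C |\<in>| f \<Longrightarrow> is_path C w \<Longrightarrow> is_path f (a # w)"

definition paths :: "'a forest \<Rightarrow> 'a list set" ("\<pi>") where
  "\<pi> f = {w. is_path f w}"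

inductive sibling_set :: "'a forest \<Rightarrow> 'a forest \<Rightarrow> bool" where
  root: "sibling_set f f"
| sub: "sibling_set f g \<Longrightarrow> Node a C |\<in>| g \<Longrightarrow> sibling_set f C"

definition siblings_distinct_labels :: "'a forest \<Rightarrow> bool" where
  "siblings_distinct_labels f \<longleftrightarrow>
     (\<forall>g. sibling_set f g \<longrightarrow> (\<forall>t t'. t |\<in>| g \<longrightarrow> t' |\<in>| g \<longrightarrow> t \<noteq> t' \<longrightarrow> label t \<noteq> label t'))"

definition merge_children :: "'a forest \<Rightarrow> 'a \<Rightarrow> 'a forest" where
  "merge_children f \<beta> = ffUnion (fimage children (ffilter (\<lambda>t. label t = \<beta>) f))"

lemma fheight_merge_children_less:
  assumes "\<beta> |\<in>| fimage label f"
  shows "fheight (merge_children f \<beta>) < fheight f"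
proof -
  have le: "theight u < theight t" if "u |\<in>| children t" for u t :: "'a tree"
  proof (cases t)
    case (Node a C)
    then have "theight u \<le> fMax (finsert 0 (fimage theight C))"
      using that by (metis fMax_ge finsertCI fimageI tree.sel(2))
    then show ?thesis using Node by simp
  qed
  have ge: "theight t \<le> fheight f" if "t |\<in>| f" for t
    unfolding fheight_def using that by (meson fMax_ge finsertCI fimageI)
  obtain t0 where t0: "t0 |\<in>| f" using assms by auto
  have pos: "0 < fheight f" using ge[OF t0] by (cases t0) auto
  have lt: "theight u < fheight f" if "u |\<in>| merge_children f \<beta>" for u
  proof -
    from that obtain t where "t |\<in>| f" "u |\<in>| children t"
      unfolding merge_children_def by (auto simp: ffUnion.rep_eq)
    then show ?thesis using le ge by (meson less_le_trans)
  qed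
  have "fMax (finsert 0 (fimage theight (merge_children f \<beta>))) |\<in>| finsert 0 (fimage theight (merge_children f \<beta>))"
    by (rule fMax_in) simp
  then have "fMax (finsert 0 (fimage theight (merge_children f \<beta>))) = 0 \<or>
    (\<exists>u. u |\<in>| merge_children f \<beta> \<and> fMax (finsert 0 (fimage theight (merge_children f \<beta>))) = theight u)"
    by (metis fimageE finsertE)
  then show ?thesis unfolding fheight_def[of "merge_children f \<beta>"] using pos lt
    by metis
qed

function Psi :: "'a forest \<Rightarrow> 'a forest" ("\<Psi>") where
  "\<Psi> f = fimage (\<lambda>\<beta>. Node \<beta> (\<Psi> (merge_children f \<beta>))) (fimage label f)"
  by auto
termination
  by (relation "measure fheight") (auto intro: fheight_merge_children_less)

end

theory Submission
  imports Defs
begin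

text \<open>A word \<open>a # w\<close> is a path of \<open>f\<close> exactly when \<open>a\<close> is a root label of \<open>f\<close> and \<open>w\<close> is a path of
  the forest obtained by merging the children of all \<open>a\<close>-labelled roots. Since \<open>\<Psi>\<close> performs precisely
  this merge at every level, induction on \<open>w\<close> gives \<open>\<pi> (\<Psi> f) = \<pi> f\<close>. Conversely \<open>\<Psi> f\<close> is determined
  by the root labels of \<open>f\<close> (the paths of length one) and by the \<open>\<Psi>\<close>-images of the merged children,
  whose paths are the suffixes of paths of \<open>f\<close>; so \<open>\<Psi> f\<close> depends only on \<open>\<pi> f\<close>. Finally, every
  sibling set of \<open>\<Psi> f\<close> is itself of the form \<open>\<Psi> h\<close>, whose roots carry pairwise distinct labels
  by construction.\<close>

declare Psi.simps [simp del]

lemma fmember_merge_children_iff: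
  "u |\<in>| merge_children f a \<longleftrightarrow> (\<exists>C. Node a C |\<in>| f \<and> u |\<in>| C)"
proof -
  have "u |\<in>| merge_children f a \<longleftrightarrow> (\<exists>t. t |\<in>| f \<and> label t = a \<and> u |\<in>| children t)"
    unfolding merge_children_def by (auto simp: ffUnion.rep_eq)
  also have "\<dots> \<longleftrightarrow> (\<exists>C. Node a C |\<in>| f \<and> u |\<in>| C)"
    by (metis tree.collapse tree.sel(1,2))
  finally show ?thesis .
qed

lemma fmember_label_fimage_iff: "a |\<in>| label |`| f \<longleftrightarrow> (\<exists>C. Node a C |\<in>| f)"
  by (metis fimage_iff tree.collapse tree.sel(1))

lemma is_path_Cons_iff: "is_path f (a # w) \<longleftrightarrow> (\<exists>C. Node a C |\<in>| f \<and> is_path C w)"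
  by (auto elim: is_path.cases intro: is_path.cons)

lemma is_path_Cons_iff_merge_children:
  "is_path f (a # w) \<longleftrightarrow> a |\<in>| label |`| f \<and> is_path (merge_children f a) w"
proof (cases w)
  case Nil
  then show ?thesis
    unfolding is_path_Cons_iff fmember_label_fimage_iff by (blast intro: is_path.nil)
next
  case (Cons b v)
  show ?thesis
    unfolding Cons is_path_Cons_iff fmember_merge_children_iff fmember_label_fimage_iff by blast
qed

lemma root_label_iff_singleton_path: "a |\<in>| label |`| f \<longleftrightarrow> [a] \<in> \<pi> f"
  unfolding paths_def by (simp add: is_path_Cons_iff_merge_children is_path.nil)

lemma Node_fmember_Psi_iff:
  "Node a C |\<in>| \<Psi> f \<longleftrightarrow> a |\<in>| label |`| f \<and> C = \<Psi> (merge_children f a)"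
  by (subst Psi.simps) auto

lemma fmember_Psi_iff:
  "t |\<in>| \<Psi> f \<longleftrightarrow> (\<exists>a. a |\<in>| label |`| f \<and> t = Node a (\<Psi> (merge_children f a)))"
  by (cases t) (auto simp: Node_fmember_Psi_iff)

lemma is_path_Psi_iff: "is_path (\<Psi> f) w \<longleftrightarrow> is_path f w"
proof (induction w arbitrary: f)
  case Nil
  then show ?case by (blast intro: is_path.nil)
next
  case (Cons a w)
  then show ?case
    unfolding is_path_Cons_iff[of "\<Psi> f"] Node_fmember_Psi_iff is_path_Cons_iff_merge_children[of f]
    by blast
qed

lemma paths_Psi: "\<pi> (\<Psi> f) = \<pi> f"
  unfolding paths_def is_path_Psi_iff ..

lemma sibling_set_Psi_image:
  assumes "sibling_set (\<Psi> f) g"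
  obtains h where "g = \<Psi> h"
proof -
  have "\<exists>h. g = \<Psi> h" if "sibling_set F g" and "F = \<Psi> f" for F
    using that
  proof (induction rule: sibling_set.induct)
    case (sub F g a C)
    then obtain h where "g = \<Psi> h" by blast
    with \<open>Node a C |\<in>| g\<close> have "C = \<Psi> (merge_children h a)"
      by (simp add: Node_fmember_Psi_iff)
    then show ?case ..
  qed blast
  with assms that show thesis by blast
qed

lemma siblings_distinct_labels_Psi: "siblings_distinct_labels (\<Psi> f)"
  unfolding siblings_distinct_labels_def
proof (intro allI impI)
  fix g t t'
  assume "sibling_set (\<Psi> f) g" "t |\<in>| g" "t' |\<in>| g" "t \<noteq> t'"
  then obtain h where "t |\<in>| \<Psi> h" "t' |\<in>| \<Psi> h"
    by (metis sibling_set_Psi_image)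
  with \<open>t \<noteq> t'\<close> show "label t \<noteq> label t'"
    by (auto simp: fmember_Psi_iff)
qed

lemma Psi_eq_if_paths_eq: "\<pi> f = \<pi> f' \<Longrightarrow> \<Psi> f = \<Psi> f'"
proof (induction f arbitrary: f' rule: Psi.induct)
  case (1 f)
  have labels: "label |`| f = label |`| f'"
    using "1.prems" by (metis fset_eqI root_label_iff_singleton_path)
  have "\<pi> (merge_children f a) = \<pi> (merge_children f' a)" if "a |\<in>| label |`| f" for a
    using "1.prems" that labels unfolding paths_def set_eq_iff mem_Collect_eq
    by (metis is_path_Cons_iff_merge_children)
  then have "\<Psi> (merge_children f a) = \<Psi> (merge_children f' a)" if "a |\<in>| label |`| f" for a
    using "1.IH" that by simp
  then show ?case
    by (subst (1 2) Psi.simps) (auto simp: labels intro: fimage_cong)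
qed

theorem mainTheorem6:
  fixes f f' :: "('a::finite) forest"
  shows "siblings_distinct_labels (\<Psi> f) \<and> \<pi> f = \<pi> (\<Psi> f) \<and> (\<pi> f = \<pi> f' \<longleftrightarrow> \<Psi> f = \<Psi> f')"
proof (intro conjI)
  show "siblings_distinct_labels (\<Psi> f)"
    by (rule siblings_distinct_labels_Psi)
  show "\<pi> f = \<pi> (\<Psi> f)"
    by (rule paths_Psi [symmetric])
  show "\<pi> f = \<pi> f' \<longleftrightarrow> \<Psi> f = \<Psi> f'"
    by (metis paths_Psi Psi_eq_if_paths_eq)
qed

end
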